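(* Let $G$ be a connected graph of order $n\ge 2$. Then $F_c(G)=n-1$ if and only if $G$ is the complete graph $K_n$ (with $n\ge 2$) or the star $K_{1,n-1}$ with $n\ge 4$.
   Context: Forcing process: given a set of initially colored vertices, at each step a colored vertex with exactly one non-colored neighbor forces (colors) that neighbor. A set $S\subseteq V(G)$ is a forcing set if iterating this process from $S$ eventually colors all vertices; it is a connected forcing set if moreover the induced subgraph $G[S]$ is connected. $F_c(G)$, the connected forcing number, is the minimum cardinality of a connected forcing set of $G$. *)

theory Defs
  imports Main
begin

definition simple_graph :: "'a set \<Rightarrow> ('a \<Rightarrow> 'a \<Rightarrow> bool) \<Rightarrow> bool" where
  "simple_graph V E \<longleftrightarrow> finite V \<and> (\<forall>u v. E u v \<longrightarrow> u \<in> V \<and> v \<in> V)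
     \<and> (\<forall>u v. E u v \<longrightarrow> E v u) \<and> (\<forall>u. \<not> E u u)"

definition induced_connected :: "('a \<Rightarrow> 'a \<Rightarrow> bool) \<Rightarrow> 'a set \<Rightarrow> bool" where
  "induced_connected E S \<longleftrightarrow> S \<noteq> {} \<and>
     (\<forall>u\<in>S. \<forall>v\<in>S. (\<lambda>x y. x \<in> S \<and> y \<in> S \<and> E x y)\<^sup>*\<^sup>* u v)"

definition connected_graph :: "'a set \<Rightarrow> ('a \<Rightarrow> 'a \<Rightarrow> bool) \<Rightarrow> bool" where
  "connected_graph V E \<longleftrightarrow> induced_connected E V"

inductive_set forced :: "('a \<Rightarrow> 'a \<Rightarrow> bool) \<Rightarrow> 'a set \<Rightarrow> 'a set" for E S where
  init: "v \<in> S \<Longrightarrow> v \<in> forced E S"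
| force: "\<lbrakk> u \<in> forced E S; E u w; \<forall>x. E u x \<and> x \<noteq> w \<longrightarrow> x \<in> forced E S \<rbrakk>
           \<Longrightarrow> w \<in> forced E S"

definition forcing_set :: "'a set \<Rightarrow> ('a \<Rightarrow> 'a \<Rightarrow> bool) \<Rightarrow> 'a set \<Rightarrow> bool" where
  "forcing_set V E S \<longleftrightarrow> S \<subseteq> V \<and> V \<subseteq> forced E S"

definition connected_forcing_set :: "'a set \<Rightarrow> ('a \<Rightarrow> 'a \<Rightarrow> bool) \<Rightarrow> 'a set \<Rightarrow> bool" where
  "connected_forcing_set V E S \<longleftrightarrow> forcing_set V E S \<and> induced_connected E S"

definition connected_forcing_number :: "'a set \<Rightarrow> ('a \<Rightarrow> 'a \<Rightarrow> bool) \<Rightarrow> nat" where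
  "connected_forcing_number V E = Min {card S | S. connected_forcing_set V E S}"

definition is_complete :: "'a set \<Rightarrow> ('a \<Rightarrow> 'a \<Rightarrow> bool) \<Rightarrow> bool" where
  "is_complete V E \<longleftrightarrow> (\<forall>u\<in>V. \<forall>v\<in>V. u \<noteq> v \<longrightarrow> E u v)"

definition is_star :: "'a set \<Rightarrow> ('a \<Rightarrow> 'a \<Rightarrow> bool) \<Rightarrow> bool" where
  "is_star V E \<longleftrightarrow> (\<exists>c\<in>V. \<forall>u\<in>V. \<forall>v\<in>V. u \<noteq> v \<longrightarrow> (E u v \<longleftrightarrow> u = c \<or> v = c))"

end

theory Submission
  imports Defs
begin

text \<open>
  The lower bounds are closure arguments: if every coloured vertex sees either none or at
  least two of the uncoloured ones, no vertex is ever forced. In \<open>K\<^sub>n\<close> any two uncoloured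
  vertices block everything, and in a star with \<open>n \<ge> 4\<close> a connected set avoiding the centre
  is a single leaf, so adding the centre still leaves two uncoloured leaves.

  Conversely, suppose \<open>G\<close> is neither complete nor such a star. It suffices to find vertices
  \<open>x \<noteq> y\<close> that are not twins and whose removal leaves \<open>G\<close> connected: a vertex \<open>u\<close> adjacent
  to \<open>x\<close> but not to \<open>y\<close> forces \<open>x\<close>, then any neighbour of \<open>y\<close> forces \<open>y\<close>, so
  \<open>F\<^sub>c(G) \<le> n - 2\<close>. If \<open>G\<close> has a universal vertex \<open>r\<close>, every pair avoiding \<open>r\<close> may be
  removed, and if all those pairs are twins then \<open>G\<close> is complete or a star on at most three
  vertices; the path on three vertices is handled by removing its centre and a leaf.
  Otherwise take distances from a vertex \<open>r\<close> of maximum degree and assume every removable pair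
  consists of twins. A vertex \<open>x\<close> at maximal distance can be removed together with any vertex
  \<open>w\<close> that is not the only lower neighbour of some other vertex. For \<open>w \<noteq> r\<close> below the top
  level the parent of \<open>w\<close> sees \<open>w\<close> but not \<open>x\<close>, so \<open>w\<close> must have such a private child.
  Following private children down from the top shows that every intermediate level is a single
  vertex, so \<open>r\<close> has degree \<open>1\<close>, whereas the parent of \<open>x\<close> has degree at least \<open>3\<close>.
\<close>

lemma induced_connected_if_descending:
  fixes f :: "'a \<Rightarrow> nat"
  assumes sym: "\<And>u v. E u v \<Longrightarrow> E v u" and root: "r \<in> S"
    and descend: "\<And>v. v \<in> S \<Longrightarrow> v \<noteq> r \<Longrightarrow> \<exists>w\<in>S. E w v \<and> f w < f v"
  shows "induced_connected E S"
proof -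
  let ?R = "\<lambda>x y. x \<in> S \<and> y \<in> S \<and> E x y"
  have from_root: "?R\<^sup>*\<^sup>* r v" if "v \<in> S" for v
    using that
  proof (induction "f v" arbitrary: v rule: less_induct)
    case less
    show ?case
    proof (cases "v = r")
      case False
      then obtain w where "w \<in> S" "E w v" "f w < f v" using descend less.prems by blast
      moreover have "?R\<^sup>*\<^sup>* r w" using less \<open>w \<in> S\<close> \<open>f w < f v\<close> by blast
      ultimately show ?thesis using less.prems by (simp add: rtranclp.rtrancl_into_rtrancl)
    qed simp
  qed
  have "symp ?R" using sym by (auto intro: sympI)
  then have "?R\<^sup>*\<^sup>* u v" if "u \<in> S" "v \<in> S" for u v
    using from_root that by (meson rtranclp_trans symp_rtranclp sympD)
  then show ?thesis using root by (auto simp: induced_connected_def)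
qed

lemma forced_subset_if_closed:
  assumes "S \<subseteq> T"
    and closed: "\<And>u w. u \<in> T \<Longrightarrow> E u w \<Longrightarrow> w \<notin> T \<Longrightarrow> \<exists>z. z \<noteq> w \<and> E u z \<and> z \<notin> T"
  shows "forced E S \<subseteq> T"
proof
  fix w assume "w \<in> forced E S"
  then show "w \<in> T"
  proof (induction rule: forced.induct)
    case (force u w)
    then show ?case using closed by blast
  qed (use assms(1) in blast)
qed

locale sgraph =
  fixes V :: "'a set" and E :: "'a \<Rightarrow> 'a \<Rightarrow> bool"
  assumes simple: "simple_graph V E"
begin

lemma finite_V: "finite V"
  using simple by (simp add: simple_graph_def)

lemma edge_in_V: "E u v \<Longrightarrow> u \<in> V \<and> v \<in> V"
  using simple by (simp add: simple_graph_def)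

lemma edge_sym: "E u v \<Longrightarrow> E v u"
  using simple by (simp add: simple_graph_def)

lemma edge_irrefl: "\<not> E u u"
  using simple by (simp add: simple_graph_def)

definition degree :: "'a \<Rightarrow> nat" where
  "degree v = card {w. E v w}"

lemma finite_neighbours: "finite {w. E v w}"
  by (rule finite_subset[OF _ finite_V]) (auto dest: edge_in_V)

lemma not_forcing_if_uniform_boundary:
  assumes "S \<subseteq> T" and "card (V - T) \<ge> 2"
    and uniform: "\<And>u. u \<in> T \<Longrightarrow> (\<forall>w\<in>V - T. E u w) \<or> (\<forall>w\<in>V - T. \<not> E u w)"
  shows "\<not> V \<subseteq> forced E S"
proof
  obtain a b where ab: "a \<in> V - T" "b \<in> V - T" "a \<noteq> b"
    using \<open>card (V - T) \<ge> 2\<close> card_le_Suc0_iff_eq[of "V - T"] finite_V by force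
  have "forced E S \<subseteq> T"
  proof (rule forced_subset_if_closed[OF \<open>S \<subseteq> T\<close>])
    fix u w assume "u \<in> T" "E u w" "w \<notin> T"
    then have "\<forall>w\<in>V - T. E u w" using uniform edge_in_V by blast
    then show "\<exists>z. z \<noteq> w \<and> E u z \<and> z \<notin> T" using ab by (metis DiffD1 DiffD2)
  qed
  moreover assume "V \<subseteq> forced E S"
  ultimately show False using ab by blast
qed

lemma finite_connected_forcing_set_cards: "finite {card S | S. connected_forcing_set V E S}"
  by (rule finite_subset[of _ "{..card V}"])
    (auto simp: connected_forcing_set_def forcing_set_def intro: card_mono[OF finite_V])

lemma connected_forcing_number_le:
  assumes "connected_forcing_set V E S"
  shows "connected_forcing_number V E \<le> card S"
  unfolding connected_forcing_number_def
  using assms finite_connected_forcing_set_cards by (intro Min_le) auto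

lemma connected_forcing_number_eqI:
  assumes "connected_forcing_set V E S" and "card S = k"
    and lower: "\<And>S. connected_forcing_set V E S \<Longrightarrow> k \<le> card S"
  shows "connected_forcing_number V E = k"
proof -
  have "k \<le> connected_forcing_number V E"
    unfolding connected_forcing_number_def using assms(1) lower
    by (subst Min_ge_iff[OF finite_connected_forcing_set_cards]) auto
  with connected_forcing_number_le[OF assms(1)] assms(2) show ?thesis by simp
qed

lemma connected_forcing_set_Diff_universal:
  assumes "r \<in> V" and universal: "\<forall>v\<in>V - {r}. E r v" and "x \<in> V" "x \<noteq> r"
  shows "connected_forcing_set V E (V - {x})"
proof -
  have "induced_connected E (V - {x})"
    by (rule induced_connected_if_descending[of E r _ "\<lambda>v. if v = r then 0 else 1"])
      (use assms edge_sym in auto)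
  moreover have "x \<in> forced E (V - {x})"
    by (rule forced.force[of r]) (use assms edge_in_V in \<open>auto intro: forced.init\<close>)
  ultimately show ?thesis
    by (auto simp: connected_forcing_set_def forcing_set_def intro: forced.init)
qed

lemma connected_forcing_number_universal:
  assumes "c \<in> V" "\<forall>v\<in>V - {c}. E c v" "card V \<ge> 2"
    and lower: "\<And>S. connected_forcing_set V E S \<Longrightarrow> card V - 1 \<le> card S"
  shows "connected_forcing_number V E = card V - 1"
proof -
  have "card (V - {c}) = card V - 1" using \<open>c \<in> V\<close> finite_V by simp
  then have "card (V - {c}) \<noteq> 0" using \<open>card V \<ge> 2\<close> by simp
  then obtain x where "x \<in> V" "x \<noteq> c" by (metis Diff_iff card.empty ex_in_conv singletonI)
  then have "connected_forcing_set V E (V - {x})"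
    using connected_forcing_set_Diff_universal[OF assms(1,2)] by blast
  moreover have "card (V - {x}) = card V - 1" using \<open>x \<in> V\<close> finite_V by simp
  ultimately show ?thesis using lower by (rule connected_forcing_number_eqI)
qed

lemma complete_connected_forcing_set_card:
  assumes "is_complete V E" and "connected_forcing_set V E S"
  shows "card V - 1 \<le> card S"
proof (rule ccontr)
  assume "\<not> card V - 1 \<le> card S"
  moreover have "S \<subseteq> V" using assms(2) by (simp add: connected_forcing_set_def forcing_set_def)
  moreover have "card (V - S) = card V - card S"
    using \<open>S \<subseteq> V\<close> by (intro card_Diff_subset) (auto intro: finite_subset[OF _ finite_V])
  ultimately have "card (V - S) \<ge> 2" by linarith
  then have "\<not> V \<subseteq> forced E S"
  proof (rule not_forcing_if_uniform_boundary[OF subset_refl])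
    fix u assume "u \<in> S"
    then show "(\<forall>w\<in>V - S. E u w) \<or> (\<forall>w\<in>V - S. \<not> E u w)"
      using assms(1) \<open>S \<subseteq> V\<close> unfolding is_complete_def
      by (intro disjI1 ballI) (metis DiffE subsetD)
  qed
  then show False using assms(2) by (simp add: connected_forcing_set_def forcing_set_def)
qed

lemma induced_connected_leaves_singleton:
  assumes centre: "\<forall>u\<in>V. \<forall>v\<in>V. u \<noteq> v \<longrightarrow> (E u v \<longleftrightarrow> u = c \<or> v = c)"
    and "induced_connected E S" "S \<subseteq> V" "c \<notin> S"
  shows "card S \<le> 1"
proof -
  have "a = b" if "a \<in> S" "b \<in> S" for a b
  proof -
    have "(\<lambda>x y. x \<in> S \<and> y \<in> S \<and> E x y)\<^sup>*\<^sup>* a b"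
      using assms(2) that by (simp add: induced_connected_def)
    then show ?thesis
    proof (induction rule: rtranclp_induct)
      case (step y z)
      then have "y \<noteq> c" "z \<noteq> c" "y \<noteq> z" using assms(4) edge_irrefl by auto
      with step show ?case using centre assms(3) by blast
    qed simp
  qed
  then show ?thesis using card_le_Suc0_iff_eq[OF finite_subset[OF assms(3) finite_V]] by auto
qed

lemma star_connected_forcing_set_card:
  assumes "c \<in> V" and centre: "\<forall>u\<in>V. \<forall>v\<in>V. u \<noteq> v \<longrightarrow> (E u v \<longleftrightarrow> u = c \<or> v = c)"
    and "card V \<ge> 4" and cfs: "connected_forcing_set V E S"
  shows "card V - 1 \<le> card S"
proof (rule ccontr)
  assume small: "\<not> card V - 1 \<le> card S"
  have "S \<subseteq> V" "induced_connected E S" "V \<subseteq> forced E S"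
    using cfs by (simp_all add: connected_forcing_set_def forcing_set_def)
  let ?T = "insert c S"
  have "card ?T \<le> card V - 2"
  proof (cases "c \<in> S")
    case False
    then have "card S \<le> 1"
      using induced_connected_leaves_singleton[OF centre] \<open>S \<subseteq> V\<close> \<open>induced_connected E S\<close> by blast
    moreover have "card ?T \<le> Suc (card S)"
      using \<open>S \<subseteq> V\<close> finite_subset[OF _ finite_V] by (simp add: card_insert_if)
    ultimately show ?thesis using \<open>card V \<ge> 4\<close> by linarith
  qed (use small in \<open>simp add: insert_absorb\<close>)
  moreover have "card (V - ?T) = card V - card ?T"
    using \<open>S \<subseteq> V\<close> \<open>c \<in> V\<close> by (intro card_Diff_subset) (auto intro: finite_subset[OF _ finite_V])
  ultimately have "card (V - ?T) \<ge> 2" using \<open>card V \<ge> 4\<close> by linarith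
  then have "\<not> V \<subseteq> forced E S"
  proof (rule not_forcing_if_uniform_boundary[rotated])
    fix u assume "u \<in> ?T"
    show "(\<forall>w\<in>V - ?T. E u w) \<or> (\<forall>w\<in>V - ?T. \<not> E u w)"
    proof (cases "u = c")
      case True
      then show ?thesis using centre \<open>c \<in> V\<close> by (intro disjI1 ballI) auto
    next
      case False
      then have "u \<in> V" using \<open>u \<in> ?T\<close> \<open>S \<subseteq> V\<close> by blast
      then show ?thesis using centre \<open>u \<in> ?T\<close> False by (intro disjI2 ballI) auto
    qed
  qed blast
  then show False using \<open>V \<subseteq> forced E S\<close> by blast
qed

definition twins :: "'a \<Rightarrow> 'a \<Rightarrow> bool" where
  "twins x y \<longleftrightarrow> (\<forall>u\<in>V - {x, y}. E u x \<longleftrightarrow> E u y)"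

definition forcing_pair :: "'a \<Rightarrow> 'a \<Rightarrow> bool" where
  "forcing_pair x y \<longleftrightarrow>
     x \<in> V \<and> y \<in> V \<and> x \<noteq> y \<and> induced_connected E (V - {x, y}) \<and> \<not> twins x y"

end

locale connected_sgraph = sgraph +
  assumes connected: "connected_graph V E"
begin

lemma connected_rtranclp:
  assumes "u \<in> V" "v \<in> V"
  shows "E\<^sup>*\<^sup>* u v"
proof -
  have "(\<lambda>x y. x \<in> V \<and> y \<in> V \<and> E x y)\<^sup>*\<^sup>* u v"
    using connected assms by (simp add: connected_graph_def induced_connected_def)
  then show ?thesis by (induction rule: rtranclp_induct) auto
qed

lemma V_nonempty: "V \<noteq> {}"
  using connected by (simp add: connected_graph_def induced_connected_def)

lemma ex_neighbour:
  assumes "x \<in> V" "y \<in> V" "x \<noteq> y"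
  shows "\<exists>z. E z y"
  using connected_rtranclp[OF assms(2,1)] assms(3)
  by (cases rule: converse_rtranclpE) (auto intro: edge_sym)

lemma connected_forcing_set_Diff_pair:
  assumes "x \<in> V" "y \<in> V" "x \<noteq> y" "induced_connected E (V - {x, y})"
    and u: "u \<in> V - {x, y}" "E u x" "\<not> E u y"
  shows "connected_forcing_set V E (V - {x, y})"
proof -
  let ?F = "forced E (V - {x, y})"
  have init: "V - {x, y} \<subseteq> ?F" by (auto intro: forced.init)
  have "x \<in> ?F"
  proof (rule forced.force[of u])
    show "\<forall>w. E u w \<and> w \<noteq> x \<longrightarrow> w \<in> ?F" using init u edge_in_V by blast
  qed (use init u in blast)+
  moreover obtain z where "E z y" using ex_neighbour assms(1-3) by blast
  then have "y \<in> ?F"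
  proof (rule forced.force[rotated])
    show "z \<in> ?F" using init \<open>x \<in> ?F\<close> \<open>E z y\<close> edge_in_V edge_irrefl by blast
    show "\<forall>w. E z w \<and> w \<noteq> y \<longrightarrow> w \<in> ?F" using init \<open>x \<in> ?F\<close> edge_in_V by blast
  qed
  ultimately show ?thesis
    using init assms(4) by (auto simp: connected_forcing_set_def forcing_set_def)
qed

lemma connected_forcing_set_Diff_forcing_pair:
  assumes "forcing_pair x y"
  shows "connected_forcing_set V E (V - {x, y})"
proof -
  have pair: "x \<in> V" "y \<in> V" "x \<noteq> y" "induced_connected E (V - {x, y})"
    using assms by (simp_all add: forcing_pair_def)
  obtain u where u: "u \<in> V - {x, y}" "E u x \<noteq> E u y"
    using assms by (auto simp: forcing_pair_def twins_def)
  show ?thesis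
  proof (cases "E u x")
    case True
    then show ?thesis using pair u connected_forcing_set_Diff_pair by blast
  next
    case False
    then show ?thesis
      using pair u connected_forcing_set_Diff_pair[of y x u] by (simp add: insert_commute)
  qed
qed


definition distance :: "'a \<Rightarrow> 'a \<Rightarrow> nat" where
  "distance r v = (LEAST k. (E ^^ k) r v)"

definition eccentricity :: "'a \<Rightarrow> nat" where
  "eccentricity r = Max (distance r ` V)"

lemma relpowp_distance: "r \<in> V \<Longrightarrow> v \<in> V \<Longrightarrow> (E ^^ distance r v) r v"
  unfolding distance_def by (metis LeastI_ex connected_rtranclp rtranclp_power)

lemma distance_le: "(E ^^ k) r v \<Longrightarrow> distance r v \<le> k"
  unfolding distance_def by (rule Least_le)

lemma distance_self [simp]: "distance r r = 0"
  using distance_le[of 0 r r] by simp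

lemma distance_eq_0_iff: "r \<in> V \<Longrightarrow> v \<in> V \<Longrightarrow> distance r v = 0 \<longleftrightarrow> v = r"
  using relpowp_distance[of r v] by auto

lemma distance_edge: "r \<in> V \<Longrightarrow> E u v \<Longrightarrow> distance r v \<le> Suc (distance r u)"
  by (meson distance_le relpowp_distance edge_in_V relpowp_Suc_I)

lemma ex_parent:
  assumes "r \<in> V" "v \<in> V" "v \<noteq> r"
  shows "\<exists>u. E u v \<and> Suc (distance r u) = distance r v"
proof -
  obtain k where k: "distance r v = Suc k"
    using assms distance_eq_0_iff by (cases "distance r v") auto
  then obtain u where u: "(E ^^ k) r u" "E u v"
    using relpowp_distance[OF assms(1,2)] by (auto elim: relpowp_Suc_E)
  then show ?thesis
    using distance_le[OF u(1)] distance_edge[OF assms(1) u(2)] k by auto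
qed

lemma distance_le_eccentricity: "v \<in> V \<Longrightarrow> distance r v \<le> eccentricity r"
  unfolding eccentricity_def using finite_V by simp

lemma ex_eccentric_vertex: "\<exists>x\<in>V. distance r x = eccentricity r"
  unfolding eccentricity_def using finite_V V_nonempty
  by (metis Max_in finite_imageI image_iff image_is_empty)

lemma forcing_pair_if_universal:
  assumes "r \<in> V" and universal: "\<forall>v\<in>V - {r}. E r v"
    and "\<not> is_complete V E" and "\<not> (is_star V E \<and> card V \<ge> 4)"
  shows "\<exists>x y. forcing_pair x y"
proof (rule ccontr)
  assume no_pair: "\<nexists>x y. forcing_pair x y"
  have twins: "twins x y" if "x \<in> V - {r}" "y \<in> V - {r}" "x \<noteq> y" for x y
  proof -
    have "induced_connected E (V - {x, y})"
      by (rule induced_connected_if_descending[of E r _ "\<lambda>v. if v = r then 0 else 1"])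
        (use that \<open>r \<in> V\<close> universal edge_sym in auto)
    then show ?thesis using no_pair that by (auto simp: forcing_pair_def)
  qed
  have no_edge: "\<not> E a b" if "a \<in> V - {r}" "b \<in> V - {r}" for a b
  proof
    assume "E a b"
    have adjacent_a: "E a z" if "z \<in> V - {r, a}" for z
      using twins[of b z] \<open>E a b\<close> \<open>a \<in> V - {r}\<close> \<open>b \<in> V - {r}\<close> that edge_irrefl
      by (cases "z = b") (auto simp: twins_def)
    have "E u v" if "u \<in> V" "v \<in> V" "u \<noteq> v" for u v
    proof (cases "r \<in> {u, v} \<or> a \<in> {u, v}")
      case True
      then show ?thesis
        using that universal adjacent_a \<open>a \<in> V - {r}\<close> edge_sym by fastforce
    next
      case False
      then have "E u a" using that adjacent_a edge_sym by blast
      then show ?thesis using twins[of v a] that False \<open>a \<in> V - {r}\<close> by (auto simp: twins_def)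
    qed
    then show False using assms(3) by (auto simp: is_complete_def)
  qed
  have "is_star V E"
    unfolding is_star_def using \<open>r \<in> V\<close> universal no_edge edge_sym by blast
  then have "card V \<le> 3" using assms(4) by simp
  obtain u v where uv: "u \<in> V" "v \<in> V" "u \<noteq> v" "\<not> E u v"
    using assms(3) by (auto simp: is_complete_def)
  then have "u \<noteq> r" "v \<noteq> r" using universal edge_sym by auto
  have "V = {r, u, v}"
  proof (rule ccontr)
    assume "V \<noteq> {r, u, v}"
    then have "{r, u, v} \<subset> V" using uv \<open>r \<in> V\<close> by blast
    then have "card {r, u, v} < card V" using finite_V by (rule psubset_card_mono[rotated])
    then show False using \<open>card V \<le> 3\<close> uv \<open>u \<noteq> r\<close> \<open>v \<noteq> r\<close> by auto
  qed
  then have "V - {r, u} = {v}" using uv \<open>u \<noteq> r\<close> \<open>v \<noteq> r\<close> by auto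
  then have "forcing_pair r u"
    using uv \<open>r \<in> V\<close> \<open>u \<noteq> r\<close> \<open>v \<noteq> r\<close> universal edge_sym
    by (auto simp: forcing_pair_def twins_def induced_connected_def)
  then show False using no_pair by blast
qed

context
  fixes r :: 'a
  assumes root: "r \<in> V" and no_pair: "\<nexists>x y. forcing_pair x y"
begin

lemma not_edge_if_distance_gap:
  assumes "Suc (distance r q) < distance r x"
  shows "\<not> E q x"
  using distance_edge[OF root, of q x] assms by linarith

lemma eccentric_twins:
  assumes "x \<in> V" "v \<in> V" "x \<noteq> v"
    and "distance r x = eccentricity r" "distance r v = eccentricity r"
  shows "twins x v"
proof -
  have "x \<noteq> r" "v \<noteq> r" using assms distance_eq_0_iff[OF root] by force+
  have "induced_connected E (V - {x, v})"
  proof (rule induced_connected_if_descending[OF edge_sym])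
    show "r \<in> V - {x, v}" using root \<open>x \<noteq> r\<close> \<open>v \<noteq> r\<close> by blast
    fix w assume w: "w \<in> V - {x, v}" "w \<noteq> r"
    then obtain p where p: "E p w" "Suc (distance r p) = distance r w"
      using ex_parent[OF root] by blast
    moreover have "distance r w \<le> eccentricity r" using w distance_le_eccentricity by blast
    ultimately show "\<exists>p\<in>V - {x, v}. E p w \<and> distance r p < distance r w"
      using assms(4,5) edge_in_V by fastforce
  qed
  then show ?thesis using no_pair assms(1-3) by (auto simp: forcing_pair_def)
qed

lemma ex_private_child:
  assumes x: "x \<in> V" "distance r x = eccentricity r"
    and w: "w \<in> V" "w \<noteq> r" "distance r w < eccentricity r"
  shows "\<exists>v\<in>V. v \<noteq> x \<and> E w v \<and> distance r v = Suc (distance r w)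
           \<and> (\<forall>z. E z v \<and> distance r z < distance r v \<longrightarrow> z = w)"
proof -
  obtain q where q: "E q w" "Suc (distance r q) = distance r w"
    using ex_parent[OF root w(1,2)] by blast
  then have "q \<in> V - {x, w}" "\<not> E q x"
    using x w edge_in_V edge_irrefl not_edge_if_distance_gap[of q x] by auto
  then have "\<not> twins x w" using q by (auto simp: twins_def)
  moreover have "x \<noteq> w" using x w by auto
  ultimately have "\<not> induced_connected E (V - {x, w})"
    using no_pair x w by (auto simp: forcing_pair_def)
  moreover have "r \<in> V - {x, w}" using root w x by auto
  ultimately obtain v where v: "v \<in> V - {x, w}" "v \<noteq> r"
      and orphan: "\<not> (\<exists>z\<in>V - {x, w}. E z v \<and> distance r z < distance r v)"
    using induced_connected_if_descending[of E r "V - {x, w}" "distance r"] edge_sym by blast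
  have lower_is_w: "z = w" if "E z v" "distance r z < distance r v" for z
  proof -
    have "z \<noteq> x" using that distance_le_eccentricity[of v r] v x by auto
    then show ?thesis using orphan that edge_in_V by blast
  qed
  obtain p where "E p v" "Suc (distance r p) = distance r v"
    using ex_parent[OF root] v by blast
  moreover have "p = w" using lower_is_w calculation by simp
  ultimately have "E w v" "distance r v = Suc (distance r w)" by simp_all
  then show ?thesis using v lower_is_w by blast
qed

lemma parent_of_eccentric_unique:
  assumes x: "x \<in> V" "distance r x = eccentricity r"
    and p: "E p x" "Suc (distance r p) = eccentricity r"
    and w: "w \<in> V" "w \<noteq> r" "Suc (distance r w) = eccentricity r"
  shows "w = p"
proof -
  obtain v where v: "v \<in> V" "v \<noteq> x" "E w v" "distance r v = eccentricity r"
      and lower: "\<forall>z. E z v \<and> distance r z < distance r v \<longrightarrow> z = w"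
    using ex_private_child[OF x w(1,2)] w(3) by auto
  have "p \<in> V - {x, v}" using p v edge_in_V edge_irrefl by auto
  then have "E p v" using eccentric_twins[OF x(1) v(1) v(2)[symmetric] x(2) v(4)] p(1)
    by (auto simp: twins_def)
  then show ?thesis using lower p(2) v(4) by auto
qed

lemma level_singleton:
  assumes x: "x \<in> V" "distance r x = eccentricity r"
    and "0 < j" "j < eccentricity r"
  shows "\<forall>w\<in>V. \<forall>w'\<in>V. distance r w = j \<longrightarrow> distance r w' = j \<longrightarrow> w = w'"
proof -
  have "j \<le> eccentricity r - 1" using assms(4) by simp
  then show ?thesis
  proof (induction rule: inc_induct)
    case base
    have "x \<noteq> r" using x assms(3,4) by auto
    then obtain p where p: "E p x" "Suc (distance r p) = eccentricity r"
      using ex_parent[OF root x(1)] x(2) by auto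
    show ?case
    proof (intro ballI impI)
      fix w w' assume "w \<in> V" "w' \<in> V" "distance r w = eccentricity r - 1"
        "distance r w' = eccentricity r - 1"
      moreover have "w \<noteq> r" "w' \<noteq> r" using calculation assms(3,4) by auto
      moreover have "Suc (eccentricity r - 1) = eccentricity r" using assms(4) by simp
      ultimately show "w = w'"
        using parent_of_eccentric_unique[OF x p] by metis
    qed
  next
    case (step n)
    show ?case
    proof (intro ballI impI)
      fix w w' assume ww: "w \<in> V" "w' \<in> V" "distance r w = n" "distance r w' = n"
      then have "w \<noteq> r" "w' \<noteq> r" using step.hyps assms(3) by auto
      have "distance r w < eccentricity r" "distance r w' < eccentricity r"
        using ww step.hyps by auto
      obtain c where c: "c \<in> V" "E w c" "distance r c = Suc n"
          and lower: "\<forall>z. E z c \<and> distance r z < distance r c \<longrightarrow> z = w"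
        using ex_private_child[OF x ww(1) \<open>w \<noteq> r\<close>] \<open>distance r w < eccentricity r\<close> ww(3)
        by blast
      obtain c' where c': "c' \<in> V" "E w' c'" "distance r c' = Suc n"
        using ex_private_child[OF x ww(2) \<open>w' \<noteq> r\<close>] \<open>distance r w' < eccentricity r\<close> ww(4)
        by blast
      have "c = c'" using step.IH c c' by blast
      then show "w = w'" using lower c' ww(4) by auto
    qed
  qed
qed

lemma degree_root_le_1:
  assumes "eccentricity r \<ge> 2"
  shows "degree r \<le> 1"
proof -
  obtain x where x: "x \<in> V" "distance r x = eccentricity r" using ex_eccentric_vertex by blast
  have "distance r v = 1" if "E r v" for v
    using distance_edge[OF root that] distance_eq_0_iff[OF root] edge_in_V[OF that] edge_irrefl that
    by fastforce
  then have "\<forall>v\<in>{v. E r v}. \<forall>v'\<in>{v. E r v}. v = v'"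
    using level_singleton[OF x, of 1] assms edge_in_V by auto
  then show ?thesis
    unfolding degree_def using card_le_Suc0_iff_eq[OF finite_neighbours] by simp
qed

lemma degree_root_not_max:
  assumes "eccentricity r \<ge> 2"
  shows "\<exists>p\<in>V. degree r < degree p"
proof -
  obtain x where x: "x \<in> V" "distance r x = eccentricity r" using ex_eccentric_vertex by blast
  then have "x \<noteq> r" using assms by auto
  then obtain p where p: "E p x" "Suc (distance r p) = eccentricity r"
    using ex_parent[OF root x(1)] x(2) by auto
  then have "p \<in> V" "p \<noteq> r" using assms edge_in_V by auto
  then obtain v where v: "v \<noteq> x" "E p v" "distance r v = eccentricity r"
    using ex_private_child[OF x] p(2) by fastforce
  obtain q where q: "E q p" "Suc (distance r q) = distance r p"
    using ex_parent[OF root \<open>p \<in> V\<close> \<open>p \<noteq> r\<close>] by blast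
  have "q \<noteq> x" "q \<noteq> v" using v q p x by auto
  then have "card {x, v, q} = 3" using v by simp
  moreover have "{x, v, q} \<subseteq> {w. E p w}" using p v q edge_sym by auto
  ultimately have "3 \<le> degree p"
    unfolding degree_def by (metis card_mono finite_neighbours)
  then show ?thesis using degree_root_le_1[OF assms] \<open>p \<in> V\<close> by force
qed

end

lemma forcing_pair_if_no_universal:
  assumes "\<forall>r\<in>V. \<exists>v\<in>V - {r}. \<not> E r v"
  shows "\<exists>x y. forcing_pair x y"
proof (rule ccontr)
  assume no_pair: "\<nexists>x y. forcing_pair x y"
  have "Max (degree ` V) \<in> degree ` V" using finite_V V_nonempty by simp
  then obtain r where r: "r \<in> V" "degree r = Max (degree ` V)" by auto
  obtain t where t: "t \<in> V" "t \<noteq> r" "\<not> E r t" using assms r(1) by blast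
  have "distance r t \<noteq> 1"
  proof
    assume "distance r t = 1"
    then obtain p where "E p t" "distance r p = 0" using ex_parent[OF r(1) t(1,2)] by auto
    then show False using t(3) distance_eq_0_iff[OF r(1)] edge_in_V by blast
  qed
  then have "eccentricity r \<ge> 2"
    using distance_le_eccentricity[OF t(1), of r] distance_eq_0_iff[OF r(1) t(1)] t(2) by linarith
  then obtain p where "p \<in> V" "degree r < degree p"
    using degree_root_not_max[OF r(1) no_pair] by blast
  moreover have "degree p \<le> Max (degree ` V)" using \<open>p \<in> V\<close> finite_V by simp
  ultimately show False using r(2) by linarith
qed

lemma ex_forcing_pair:
  assumes "\<not> is_complete V E" and "\<not> (is_star V E \<and> card V \<ge> 4)"
  shows "\<exists>x y. forcing_pair x y"
  using forcing_pair_if_universal[OF _ _ assms] forcing_pair_if_no_universal by blast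

end

theorem theorem1:
  fixes V :: "'a set" and E :: "'a \<Rightarrow> 'a \<Rightarrow> bool"
  assumes "simple_graph V E" and "connected_graph V E" and "card V \<ge> 2"
  shows "connected_forcing_number V E = card V - 1 \<longleftrightarrow>
           is_complete V E \<or> (is_star V E \<and> card V \<ge> 4)"
proof -
  interpret connected_sgraph V E using assms(1,2) by unfold_locales
  show ?thesis
  proof
    assume "connected_forcing_number V E = card V - 1"
    show "is_complete V E \<or> (is_star V E \<and> card V \<ge> 4)"
    proof (rule ccontr)
      assume "\<not> ?thesis"
      then obtain x y where "forcing_pair x y" using ex_forcing_pair by blast
      then have "connected_forcing_number V E \<le> card V - 2"
        using connected_forcing_number_le[OF connected_forcing_set_Diff_forcing_pair]
        by (simp add: forcing_pair_def finite_V card_Diff_subset numeral_2_eq_2)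
      with \<open>connected_forcing_number V E = card V - 1\<close> assms(3) show False by linarith
    qed
  next
    assume "is_complete V E \<or> (is_star V E \<and> card V \<ge> 4)"
    then show "connected_forcing_number V E = card V - 1"
    proof
      assume complete: "is_complete V E"
      obtain c where "c \<in> V" using assms(3) by fastforce
      moreover have "\<forall>v\<in>V - {c}. E c v" using complete \<open>c \<in> V\<close> by (auto simp: is_complete_def)
      ultimately show ?thesis
        using connected_forcing_number_universal[OF _ _ assms(3)]
          complete_connected_forcing_set_card[OF complete] by blast
    next
      assume "is_star V E \<and> card V \<ge> 4"
      then obtain c where c: "c \<in> V" "card V \<ge> 4"
          and centre: "\<forall>u\<in>V. \<forall>v\<in>V. u \<noteq> v \<longrightarrow> (E u v \<longleftrightarrow> u = c \<or> v = c)"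
        unfolding is_star_def by blast
      then have "\<forall>v\<in>V - {c}. E c v" by auto
      with c show ?thesis
        using connected_forcing_number_universal[OF _ _ assms(3)]
          star_connected_forcing_set_card[OF c(1) centre c(2)] by simp
    qed
  qed
qed

end
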